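(* Let $L,L'$ be finite simplicial complexes, $\varphi: L\to L'$ a bijective simplicial finite-fibration, and $n\ge2$. Then $$\mathrm{scat}(\varphi)\le\mathrm{scat}(L)\le\mathrm{TC}(\varphi)\le\min\{\mathrm{TC}(L),\mathrm{TC}_n(\varphi)\}\le\mathrm{TC}_n(L).$$
   Context: Simplicial complexes are abstract and edge-path connected; $K^n$ is the $n$-fold categorical product and $K\times K'$ the categorical product (vertices are tuples of vertices; a set of vertices is a simplex iff each coordinate projection is a simplex). Simplicial maps $f,g: K\to K'$ are contiguous if $f(\sigma)\cup g(\sigma)$ is a simplex for every simplex $\sigma$; $f\sim g$ if joined by a finite chain of contiguous simplicial maps. $\mathrm{SD}(\varphi_1,\dots,\varphi_m)$ for simplicial maps $K\to K'$ is the least $k\ge0$ such that $K$ is a union of subcomplexes $K_0,\dots,K_k$ with $\varphi_i|_{K_j}\sim\varphi_l|_{K_j}$ for all $i,l,j$. With $p_i: L^n\to L$ the projections: $\mathrm{TC}_n(L)=\mathrm{SD}(p_1,\dots,p_n)$, $\mathrm{TC}(L)=\mathrm{TC}_2(L)$, $\mathrm{TC}_n(\varphi)=\mathrm{SD}(\varphi\circ p_1,\dots,\varphi\circ p_n)$. For a vertex $v_0$ of $L$ and constant map $c_{v_0}: L\to L$: $\mathrm{scat}(L)=\mathrm{SD}(1_L,c_{v_0})$, $\mathrm{scat}(\varphi)=\mathrm{SD}(\varphi,\varphi\circ c_{v_0})$. $I_m$ is the complex with vertices $0,\dots,m$ and edges $\{i,i+1\}$; $\varphi$ is a simplicial finite-fibration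 if for every finite complex $N$, $m\ge1$, inclusion $i: N\times\{0\}\to N\times I_m$ and simplicial $g: N\times\{0\}\to L$, $G: N\times I_m\to L'$ with $\varphi\circ g=G\circ i$, there is simplicial $\widetilde G$ with $\widetilde G\circ i=g$, $\varphi\circ\widetilde G=G$. $\mathrm{TC}(\varphi)$ is the simplicial Schwarz genus of $\pi_\varphi: L^I\to L\times L'$, $\delta\mapsto(\delta(0),\varphi(\delta(1)))$, where $L^I$ is the simplicial path complex of $L$; the simplicial Schwarz genus of $p: E\to B$ is the least $k\ge0$ such that $B$ is a union of subcomplexes $B_0,\dots,B_k$ each admitting a simplicial $s: B_j\to E$ with $p\circ s$ the inclusion. *)

theory Defs
  imports Main "HOL-Library.Extended_Nat"
begin

definition simplicial_complex :: "'a set set \<Rightarrow> bool" where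
  "simplicial_complex K \<longleftrightarrow>
     (\<forall>\<sigma>\<in>K. finite \<sigma> \<and> \<sigma> \<noteq> {}) \<and> (\<forall>\<sigma>\<in>K. \<forall>\<tau>. \<tau> \<subseteq> \<sigma> \<and> \<tau> \<noteq> {} \<longrightarrow> \<tau> \<in> K)"

definition vertices :: "'a set set \<Rightarrow> 'a set" where
  "vertices K = \<Union>K"

definition finite_complex :: "'a set set \<Rightarrow> bool" where
  "finite_complex K \<longleftrightarrow> finite (vertices K)"

definition edge_path_connected :: "'a set set \<Rightarrow> bool" where
  "edge_path_connected K \<longleftrightarrow>
     (\<forall>u\<in>vertices K. \<forall>v\<in>vertices K. (u, v) \<in> {(x, y). {x, y} \<in> K}\<^sup>*)"

definition subcomplex :: "'a set set \<Rightarrow> 'a set set \<Rightarrow> bool" where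
  "subcomplex J K \<longleftrightarrow> J \<subseteq> K \<and> simplicial_complex J"

text \<open>Simplicial maps are represented by total functions on vertex types; only their
  values on vertices matter.\<close>

definition simplicial_map :: "'a set set \<Rightarrow> 'b set set \<Rightarrow> ('a \<Rightarrow> 'b) \<Rightarrow> bool" where
  "simplicial_map K K' f \<longleftrightarrow> (\<forall>\<sigma>\<in>K. f ` \<sigma> \<in> K')"

definition contiguous :: "'a set set \<Rightarrow> 'b set set \<Rightarrow> ('a \<Rightarrow> 'b) \<Rightarrow> ('a \<Rightarrow> 'b) \<Rightarrow> bool" where
  "contiguous K K' f g \<longleftrightarrow> simplicial_map K K' f \<and> simplicial_map K K' g \<and>
     (\<forall>\<sigma>\<in>K. f ` \<sigma> \<union> g ` \<sigma> \<in> K')"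

definition contiguity_equiv :: "'a set set \<Rightarrow> 'b set set \<Rightarrow> ('a \<Rightarrow> 'b) \<Rightarrow> ('a \<Rightarrow> 'b) \<Rightarrow> bool" where
  "contiguity_equiv K K' f g \<longleftrightarrow> simplicial_map K K' f \<and> simplicial_map K K' g \<and>
     (contiguous K K')\<^sup>*\<^sup>* f g"

definition cprod :: "'a set set \<Rightarrow> 'b set set \<Rightarrow> ('a \<times> 'b) set set" where
  "cprod K K' = {\<sigma>. finite \<sigma> \<and> \<sigma> \<noteq> {} \<and> fst ` \<sigma> \<in> K \<and> snd ` \<sigma> \<in> K'}"

definition cpower :: "'a set set \<Rightarrow> nat \<Rightarrow> 'a list set set" where
  "cpower K n = {\<sigma>. finite \<sigma> \<and> \<sigma> \<noteq> {} \<and> (\<forall>xs\<in>\<sigma>. length xs = n) \<and>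
                     (\<forall>i<n. (\<lambda>xs. xs ! i) ` \<sigma> \<in> K)}"

definition SD :: "'a set set \<Rightarrow> 'b set set \<Rightarrow> ('a \<Rightarrow> 'b) list \<Rightarrow> enat" where
  "SD K K' phis = Inf {enat k | k. \<exists>Ks :: nat \<Rightarrow> 'a set set.
      (\<forall>j\<le>k. subcomplex (Ks j) K) \<and> (\<Union>j\<le>k. Ks j) = K \<and>
      (\<forall>j\<le>k. \<forall>i<length phis. \<forall>l<length phis.
          contiguity_equiv (Ks j) K' (phis ! i) (phis ! l))}"

definition TCn :: "'a set set \<Rightarrow> nat \<Rightarrow> enat" where
  "TCn L n = SD (cpower L n) L (map (\<lambda>i xs. xs ! i) [0..<n])"

definition TC :: "'a set set \<Rightarrow> enat" where
  "TC L = TCn L 2"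

definition TCn_map :: "'a set set \<Rightarrow> 'b set set \<Rightarrow> ('a \<Rightarrow> 'b) \<Rightarrow> nat \<Rightarrow> enat" where
  "TCn_map L L' \<phi> n = SD (cpower L n) L' (map (\<lambda>i xs. \<phi> (xs ! i)) [0..<n])"

definition scat :: "'a set set \<Rightarrow> 'a \<Rightarrow> enat" where
  "scat L v0 = SD L L [id, (\<lambda>_. v0)]"

definition scat_map :: "'a set set \<Rightarrow> 'b set set \<Rightarrow> ('a \<Rightarrow> 'b) \<Rightarrow> 'a \<Rightarrow> enat" where
  "scat_map L L' \<phi> v0 = SD L L' [\<phi>, (\<lambda>_. \<phi> v0)]"

definition interval :: "nat \<Rightarrow> nat set set" where
  "interval m = {\<sigma>. \<sigma> \<noteq> {} \<and> \<sigma> \<subseteq> {0..m} \<and> (\<exists>i. \<sigma> \<subseteq> {i, Suc i})}"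

text \<open>Test complexes N are taken with vertices in nat (every finite complex is isomorphic
  to one of these); following the standing convention they are edge-path connected.\<close>
definition finite_fibration :: "'a set set \<Rightarrow> 'b set set \<Rightarrow> ('a \<Rightarrow> 'b) \<Rightarrow> bool" where
  "finite_fibration L L' \<phi> \<longleftrightarrow>
    (\<forall>(N :: nat set set) (m :: nat) (g :: nat \<times> nat \<Rightarrow> 'a) (G :: nat \<times> nat \<Rightarrow> 'b).
       simplicial_complex N \<and> edge_path_connected N \<and> finite_complex N \<and> m \<ge> 1 \<and>
       simplicial_map (cprod N {{0}}) L g \<and>
       simplicial_map (cprod N (interval m)) L' G \<and>
       (\<forall>x\<in>vertices (cprod N {{0}}). \<phi> (g x) = G x)
       \<longrightarrow> (\<exists>Gt :: nat \<times> nat \<Rightarrow> 'a.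
              simplicial_map (cprod N (interval m)) L Gt \<and>
              (\<forall>x\<in>vertices (cprod N {{0}}). Gt x = g x) \<and>
              (\<forall>x\<in>vertices (cprod N (interval m)). \<phi> (Gt x) = G x)))"

definition spaths :: "'a set set \<Rightarrow> (nat \<Rightarrow> 'a) set" where
  "spaths K = {\<gamma>. (\<forall>i. {\<gamma> i, \<gamma> (Suc i)} \<in> K) \<and> (\<exists>N. \<forall>i\<ge>N. \<gamma> i = \<gamma> N)}"

text \<open>Path complex K^I: a finite nonempty set of paths is a simplex iff for every i the
  images of the edge {i,i+1} span a simplex (exponential object).\<close>
definition path_complex :: "'a set set \<Rightarrow> (nat \<Rightarrow> 'a) set set" where
  "path_complex K = {\<Gamma>. finite \<Gamma> \<and> \<Gamma> \<noteq> {} \<and> \<Gamma> \<subseteq> spaths K \<and>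
                        (\<forall>i. (\<Union>\<gamma>\<in>\<Gamma>. {\<gamma> i, \<gamma> (Suc i)}) \<in> K)}"

definition path_end :: "(nat \<Rightarrow> 'a) \<Rightarrow> 'a" where
  "path_end \<gamma> = \<gamma> (LEAST N. \<forall>i\<ge>N. \<gamma> i = \<gamma> N)"

definition pi_map :: "('a \<Rightarrow> 'b) \<Rightarrow> (nat \<Rightarrow> 'a) \<Rightarrow> 'a \<times> 'b" where
  "pi_map \<phi> \<delta> = (\<delta> 0, \<phi> (path_end \<delta>))"

definition schwarz_genus :: "'e set set \<Rightarrow> 'b set set \<Rightarrow> ('e \<Rightarrow> 'b) \<Rightarrow> enat" where
  "schwarz_genus E B p = Inf {enat k | k. \<exists>Bs :: nat \<Rightarrow> 'b set set.
      (\<forall>j\<le>k. subcomplex (Bs j) B) \<and> (\<Union>j\<le>k. Bs j) = B \<and>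
      (\<forall>j\<le>k. \<exists>s :: 'b \<Rightarrow> 'e. simplicial_map (Bs j) E s \<and>
                 (\<forall>v\<in>vertices (Bs j). p (s v) = v))}"

definition TC_map :: "'a set set \<Rightarrow> 'b set set \<Rightarrow> ('a \<Rightarrow> 'b) \<Rightarrow> enat" where
  "TC_map L L' \<phi> = schwarz_genus (path_complex L) (cprod L L') (pi_map \<phi>)"

end

(*
  All invariants involved count covers of a complex by subcomplexes with a local property
  (cover_genus), so each inequality comes from pulling covers back along a simplicial map.
  The key translation is that, on a finite complex, a simplicial map into the path complex
  L^I is the same thing as a finite chain of contiguities between its two end maps; hence a
  local section of pi_phi over B is a contiguity chain from the first projection to a lift of
  the second.  Composing with phi gives scat(phi) <= scat(L) and TC_n(phi) <= TC_n(L).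
  Pulling back along x |-> (x, phi v0) gives scat(L) <= TC(phi), injectivity of phi forcing the
  paths to end at v0.  A finite fibration lifts every simplex of L', so the inverse psi of the
  bijection phi is simplicial, and pulling back along (x, y) |-> (x, psi y, ..., psi y) gives
  TC(phi) <= TC_n(phi) for all n >= 2, in particular TC(phi) <= TC_2(phi) <= TC(L).
*)

theory Submission
  imports Defs
begin

lemma simplicial_complexI:
  assumes "\<And>\<sigma>. \<sigma> \<in> K \<Longrightarrow> finite \<sigma> \<and> \<sigma> \<noteq> {}"
    and "\<And>\<sigma> \<tau>. \<sigma> \<in> K \<Longrightarrow> \<tau> \<subseteq> \<sigma> \<Longrightarrow> \<tau> \<noteq> {} \<Longrightarrow> \<tau> \<in> K"
  shows "simplicial_complex K"
  using assms unfolding simplicial_complex_def by blast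

lemma simplicial_complex_simplex:
  "simplicial_complex K \<Longrightarrow> \<sigma> \<in> K \<Longrightarrow> finite \<sigma> \<and> \<sigma> \<noteq> {}"
  unfolding simplicial_complex_def by blast

lemma simplicial_complex_face:
  "simplicial_complex K \<Longrightarrow> \<sigma> \<in> K \<Longrightarrow> \<tau> \<subseteq> \<sigma> \<Longrightarrow> \<tau> \<noteq> {} \<Longrightarrow> \<tau> \<in> K"
  unfolding simplicial_complex_def by blast

lemma in_vertices: "\<sigma> \<in> K \<Longrightarrow> v \<in> \<sigma> \<Longrightarrow> v \<in> vertices K"
  unfolding vertices_def by blast

lemma vertices_mono: "J \<subseteq> K \<Longrightarrow> vertices J \<subseteq> vertices K"
  unfolding vertices_def by blast

lemma singleton_in_complex:
  assumes "simplicial_complex K" "v \<in> vertices K"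
  shows "{v} \<in> K"
  using assms simplicial_complex_face unfolding vertices_def by blast

lemma simplicial_map_comp:
  "simplicial_map K K' f \<Longrightarrow> simplicial_map K' K'' g \<Longrightarrow> simplicial_map K K'' (g \<circ> f)"
  unfolding simplicial_map_def image_comp[symmetric] by blast

lemma simplicial_map_vertex:
  "simplicial_map K K' f \<Longrightarrow> v \<in> vertices K \<Longrightarrow> f v \<in> vertices K'"
  unfolding simplicial_map_def vertices_def by blast

lemma simplicial_complex_cprod:
  assumes "simplicial_complex L" "simplicial_complex L'"
  shows "simplicial_complex (cprod L L')"
proof (rule simplicial_complexI)
  fix \<sigma> \<tau> assume "\<sigma> \<in> cprod L L'" "\<tau> \<subseteq> \<sigma>" "\<tau> \<noteq> {}"
  then show "\<tau> \<in> cprod L L'"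
    using simplicial_complex_face[OF assms(1), of "fst ` \<sigma>" "fst ` \<tau>"]
      simplicial_complex_face[OF assms(2), of "snd ` \<sigma>" "snd ` \<tau>"]
    unfolding cprod_def by (auto intro: finite_subset)
qed (simp add: cprod_def)

lemma cprod_vertices:
  assumes "v \<in> vertices (cprod L L')"
  shows "fst v \<in> vertices L" "snd v \<in> vertices L'"
  using assms unfolding vertices_def cprod_def by auto

lemma contiguous_sym: "contiguous K K' f g \<Longrightarrow> contiguous K K' g f"
  unfolding contiguous_def by (simp add: Un_commute)

lemma contiguous_if_agree:
  assumes "simplicial_map K K' f" "\<forall>v\<in>vertices K. f v = g v"
  shows "contiguous K K' f g"
proof -
  have "g ` \<sigma> = f ` \<sigma>" if "\<sigma> \<in> K" for \<sigma>
    using assms(2) in_vertices[OF that] by (metis image_cong)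
  then show ?thesis using assms(1) unfolding contiguous_def simplicial_map_def by simp
qed

lemma contiguous_postcomp:
  assumes "contiguous K K' f g" "simplicial_map K' K'' \<psi>"
  shows "contiguous K K'' (\<psi> \<circ> f) (\<psi> \<circ> g)"
  using assms simplicial_map_comp unfolding contiguous_def simplicial_map_def
  by (metis image_Un image_comp)

lemma contiguous_precomp:
  assumes "contiguous J K' f g" "simplicial_map K J e"
  shows "contiguous K K' (f \<circ> e) (g \<circ> e)"
  using assms simplicial_map_comp unfolding contiguous_def simplicial_map_def
  by (metis image_comp)

lemma rtranclp_map:
  assumes "r\<^sup>*\<^sup>* a b" "\<And>x y. r x y \<Longrightarrow> s (f x) (f y)"
  shows "s\<^sup>*\<^sup>* (f a) (f b)"
  using assms(1) by induction (auto intro: rtranclp.rtrancl_into_rtrancl assms(2))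

lemma contiguity_equiv_refl: "simplicial_map K K' f \<Longrightarrow> contiguity_equiv K K' f f"
  unfolding contiguity_equiv_def by simp

lemma contiguity_equiv_sym: "contiguity_equiv K K' f g \<Longrightarrow> contiguity_equiv K K' g f"
  using symp_rtranclp[of "contiguous K K'"] contiguous_sym
  unfolding contiguity_equiv_def by (metis sympD sympI)

lemma contiguity_equiv_postcomp:
  "contiguity_equiv K K' f g \<Longrightarrow> simplicial_map K' K'' \<psi> \<Longrightarrow>
    contiguity_equiv K K'' (\<psi> \<circ> f) (\<psi> \<circ> g)"
  unfolding contiguity_equiv_def
  by (auto intro: simplicial_map_comp rtranclp_map[where f = "(\<circ>) \<psi>"] contiguous_postcomp)

lemma contiguity_equiv_precomp:
  "contiguity_equiv J K' f g \<Longrightarrow> simplicial_map K J e \<Longrightarrow>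
    contiguity_equiv K K' (f \<circ> e) (g \<circ> e)"
  unfolding contiguity_equiv_def
  by (auto intro: simplicial_map_comp rtranclp_map[where f = "\<lambda>f. f \<circ> e"] contiguous_precomp)

lemma contiguity_equiv_cong:
  assumes "contiguity_equiv K K' f g"
    and "\<forall>v\<in>vertices K. f v = f' v" "\<forall>v\<in>vertices K. g v = g' v"
  shows "contiguity_equiv K K' f' g'"
proof -
  have f'f: "contiguous K K' f' f" and gg': "contiguous K K' g g'"
    using assms contiguous_if_agree contiguous_sym unfolding contiguity_equiv_def by blast+
  have "(contiguous K K')\<^sup>*\<^sup>* f' g'"
    using assms(1) f'f gg' unfolding contiguity_equiv_def
    by (meson converse_rtranclp_into_rtranclp rtranclp.rtrancl_into_rtrancl)
  then show ?thesis using f'f gg' unfolding contiguity_equiv_def contiguous_def by blast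
qed

definition pullback :: "'a set set \<Rightarrow> ('a \<Rightarrow> 'c) \<Rightarrow> 'c set set \<Rightarrow> 'a set set" where
  "pullback K e J = {\<sigma>\<in>K. e ` \<sigma> \<in> J}"

lemma subcomplex_pullback:
  assumes "simplicial_complex K" "simplicial_complex J"
  shows "subcomplex (pullback K e J) K"
  unfolding subcomplex_def
proof
  show "simplicial_complex (pullback K e J)"
  proof (rule simplicial_complexI)
    fix \<sigma> assume "\<sigma> \<in> pullback K e J"
    then show "finite \<sigma> \<and> \<sigma> \<noteq> {}"
      using simplicial_complex_simplex[OF assms(1)] unfolding pullback_def by blast
  next
    fix \<sigma> \<tau> assume "\<sigma> \<in> pullback K e J" "\<tau> \<subseteq> \<sigma>" "\<tau> \<noteq> {}"
    moreover have "e ` \<tau> \<subseteq> e ` \<sigma>" "e ` \<tau> \<noteq> {}" using calculation by auto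
    ultimately show "\<tau> \<in> pullback K e J"
      using simplicial_complex_face[OF assms(1), of \<sigma> \<tau>]
        simplicial_complex_face[OF assms(2), of "e ` \<sigma>" "e ` \<tau>"]
      unfolding pullback_def by blast
  qed
qed (auto simp: pullback_def)

lemma simplicial_map_pullback: "simplicial_map (pullback K e J) J e"
  unfolding pullback_def simplicial_map_def by blast

lemma pullback_cover:
  assumes "simplicial_map K K2 e" "(\<Union>j\<le>k. Js j) = K2"
  shows "(\<Union>j\<le>k. pullback K e (Js j)) = K"
  using assms unfolding pullback_def simplicial_map_def by blast

definition cover_genus :: "'a set set \<Rightarrow> ('a set set \<Rightarrow> bool) \<Rightarrow> enat" where
  "cover_genus K P = Inf {enat k | k. \<exists>Ks :: nat \<Rightarrow> 'a set set.
      (\<forall>j\<le>k. subcomplex (Ks j) K) \<and> (\<Union>j\<le>k. Ks j) = K \<and> (\<forall>j\<le>k. P (Ks j))}"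

lemma SD_eq_cover_genus:
  "SD K K' phis = cover_genus K
     (\<lambda>J. \<forall>i<length phis. \<forall>l<length phis. contiguity_equiv J K' (phis ! i) (phis ! l))"
  unfolding SD_def cover_genus_def ..

lemma schwarz_genus_eq_cover_genus:
  "schwarz_genus E B p = cover_genus B
     (\<lambda>J. \<exists>s. simplicial_map J E s \<and> (\<forall>v\<in>vertices J. p (s v) = v))"
  unfolding schwarz_genus_def cover_genus_def ..

lemma cover_genus_mono:
  assumes "\<And>J. subcomplex J K \<Longrightarrow> P J \<Longrightarrow> Q J"
  shows "cover_genus K Q \<le> cover_genus K P"
  unfolding cover_genus_def by (rule Inf_superset_mono) (use assms in blast)

lemma cover_genus_pullback_le:
  assumes "simplicial_complex K" "simplicial_map K K2 e"
    and "\<And>J. subcomplex J K2 \<Longrightarrow> P J \<Longrightarrow> Q (pullback K e J)"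
  shows "cover_genus K Q \<le> cover_genus K2 P"
proof -
  have "\<exists>Ks. (\<forall>j\<le>k. subcomplex (Ks j) K) \<and> (\<Union>j\<le>k. Ks j) = K \<and> (\<forall>j\<le>k. Q (Ks j))"
    if "\<forall>j\<le>k. subcomplex (Js j) K2" "(\<Union>j\<le>k. Js j) = K2" "\<forall>j\<le>k. P (Js j)"
    for k and Js :: "nat \<Rightarrow> _"
  proof (intro exI conjI)
    show "\<forall>j\<le>k. subcomplex (pullback K e (Js j)) K"
      using that(1) subcomplex_pullback[OF assms(1)] unfolding subcomplex_def by blast
    show "(\<Union>j\<le>k. pullback K e (Js j)) = K" using pullback_cover[OF assms(2) that(2)] .
    show "\<forall>j\<le>k. Q (pullback K e (Js j))" using that(1,3) assms(3) by blast
  qed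
  then show ?thesis unfolding cover_genus_def by (intro Inf_superset_mono) blast
qed

lemma SD_pair: "SD K K' [f, g] = cover_genus K (\<lambda>J. contiguity_equiv J K' f g)"
proof -
  have "(\<forall>i<length [f, g]. \<forall>l<length [f, g]. contiguity_equiv J K' ([f, g] ! i) ([f, g] ! l))
      \<longleftrightarrow> contiguity_equiv J K' f g" for J
  proof
    assume fg: "contiguity_equiv J K' f g"
    moreover have "simplicial_map J K' f" "simplicial_map J K' g"
      using fg unfolding contiguity_equiv_def by blast+
    ultimately show "\<forall>i<length [f, g]. \<forall>l<length [f, g]. contiguity_equiv J K' ([f, g] ! i) ([f, g] ! l)"
      using contiguity_equiv_sym[OF fg] by (auto simp: less_Suc_eq contiguity_equiv_refl)
  next
    assume "\<forall>i<length [f, g]. \<forall>l<length [f, g]. contiguity_equiv J K' ([f, g] ! i) ([f, g] ! l)"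
    from this[rule_format, of 0 1] show "contiguity_equiv J K' f g" by simp
  qed
  then show ?thesis unfolding SD_eq_cover_genus by simp
qed

lemma cover_genus_pair_le_SD:
  assumes "i < length phis" "l < length phis"
  shows "cover_genus K (\<lambda>J. contiguity_equiv J K' (phis ! i) (phis ! l)) \<le> SD K K' phis"
  unfolding SD_eq_cover_genus by (rule cover_genus_mono) (use assms in blast)

lemma SD_postcomp_le:
  assumes "simplicial_map K' K'' \<psi>"
  shows "SD K K'' (map ((\<circ>) \<psi>) phis) \<le> SD K K' phis"
  unfolding SD_eq_cover_genus
  by (rule cover_genus_mono) (simp add: contiguity_equiv_postcomp[OF _ assms])

lemma path_end_eq:
  assumes "\<forall>i\<ge>M. \<gamma> i = \<gamma> M"
  shows "path_end \<gamma> = \<gamma> M"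
proof -
  define N where "N = (LEAST N. \<forall>i\<ge>N. \<gamma> i = \<gamma> N)"
  have "\<forall>i\<ge>N. \<gamma> i = \<gamma> N" unfolding N_def by (rule LeastI[of _ M]) (rule assms)
  moreover have "N \<le> M" unfolding N_def by (rule Least_le) (rule assms)
  ultimately have "\<gamma> M = \<gamma> N" by blast
  then show ?thesis unfolding path_end_def N_def by simp
qed

lemma path_map_of_contiguity_equiv:
  assumes K: "simplicial_complex K" and fg: "contiguity_equiv K L f g"
  obtains s where "simplicial_map K (path_complex L) s" "\<And>v. s v 0 = f v"
    "\<And>v. path_end (s v) = g v"
proof -
  have "(contiguous K L)\<^sup>*\<^sup>* f g" using fg unfolding contiguity_equiv_def by blast
  then obtain M where "(contiguous K L ^^ M) f g" by (metis rtranclp_power)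
  then obtain c where c: "c 0 = f" "c M = g" "\<forall>i<M. contiguous K L (c i) (c (Suc i))"
    by (metis relpowp_fun_conv)
  have step: "c (min i M) ` \<tau> \<union> c (min (Suc i) M) ` \<tau> \<in> L" if "\<tau> \<in> K" for \<tau> i
  proof (cases "i < M")
    case True
    then show ?thesis using c(3) that unfolding contiguous_def by (simp add: min_def)
  next
    case False
    have "simplicial_map K L g" using fg unfolding contiguity_equiv_def by blast
    then show ?thesis using False that c(2) unfolding simplicial_map_def by simp
  qed
  define s where "s v i = c (min i M) v" for v i
  have "simplicial_map K (path_complex L) s"
    unfolding simplicial_map_def
  proof
    fix \<tau> assume \<tau>: "\<tau> \<in> K"
    have edges: "(\<Union>\<gamma>\<in>s ` \<tau>. {\<gamma> i, \<gamma> (Suc i)}) = c (min i M) ` \<tau> \<union> c (min (Suc i) M) ` \<tau>" for i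
      unfolding s_def by auto
    have "s v \<in> spaths L" if "v \<in> \<tau>" for v
    proof -
      have "{v} \<in> K" using simplicial_complex_face[OF K \<tau>] that by blast
      then have "{s v i, s v (Suc i)} \<in> L" for i
        using step[of "{v}" i] unfolding s_def by (simp add: insert_commute)
      moreover have "\<forall>i\<ge>M. s v i = s v M" unfolding s_def by simp
      ultimately show ?thesis unfolding spaths_def by blast
    qed
    then show "s ` \<tau> \<in> path_complex L"
      using simplicial_complex_simplex[OF K \<tau>] step[OF \<tau>] edges unfolding path_complex_def by auto
  qed
  moreover have "s v 0 = f v" for v using c(1) unfolding s_def by simp
  moreover have "path_end (s v) = g v" for v
    using path_end_eq[of M "s v"] c(2) unfolding s_def by simp
  ultimately show ?thesis by (rule that)
qed

lemma contiguity_equiv_of_path_map: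
  assumes K: "simplicial_complex K" "finite (vertices K)" and L: "simplicial_complex L"
    and t: "simplicial_map K (path_complex L) t"
  shows "contiguity_equiv K L (\<lambda>v. t v 0) (\<lambda>v. path_end (t v))"
proof -
  define c where "c i v = t v i" for i v
  have step: "c i ` \<tau> \<union> c (Suc i) ` \<tau> \<in> L" if "\<tau> \<in> K" for \<tau> i
  proof -
    have "t ` \<tau> \<in> path_complex L" using t that unfolding simplicial_map_def by blast
    then have "(\<Union>\<gamma>\<in>t ` \<tau>. {\<gamma> i, \<gamma> (Suc i)}) \<in> L" unfolding path_complex_def by blast
    moreover have "(\<Union>\<gamma>\<in>t ` \<tau>. {\<gamma> i, \<gamma> (Suc i)}) = c i ` \<tau> \<union> c (Suc i) ` \<tau>"
      unfolding c_def by auto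
    ultimately show ?thesis by simp
  qed
  have c_map: "simplicial_map K L (c i)" for i
    unfolding simplicial_map_def
  proof
    fix \<tau> assume "\<tau> \<in> K"
    moreover have "c i ` \<tau> \<noteq> {}" using simplicial_complex_simplex[OF K(1) calculation] by blast
    ultimately show "c i ` \<tau> \<in> L" using simplicial_complex_face[OF L step] by blast
  qed
  have chain: "(contiguous K L)\<^sup>*\<^sup>* (c 0) (c N)" for N
  proof (induction N)
    case (Suc N)
    moreover have "contiguous K L (c N) (c (Suc N))"
      using c_map step unfolding contiguous_def by blast
    ultimately show ?case by (meson rtranclp.rtrancl_into_rtrancl)
  qed simp
  have "\<forall>v\<in>vertices K. \<exists>N. \<forall>i\<ge>N. t v i = t v N"
  proof
    fix v assume "v \<in> vertices K"
    then have "t ` {v} \<in> path_complex L"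
      using t singleton_in_complex[OF K(1)] unfolding simplicial_map_def by blast
    then show "\<exists>N. \<forall>i\<ge>N. t v i = t v N" unfolding path_complex_def spaths_def by simp
  qed
  then obtain P where P: "\<forall>v\<in>vertices K. \<forall>i\<ge>P v. t v i = t v (P v)"
    by (rule bchoice[THEN exE])
  \<comment> \<open>finiteness of K gives a common time after which all the paths t v are constant\<close>
  obtain N where N: "\<forall>n\<in>P ` vertices K. n \<le> N"
    using K(2) finite_nat_set_iff_bounded_le by blast
  have ce: "contiguity_equiv K L (c 0) (c N)"
    using c_map chain unfolding contiguity_equiv_def by blast
  have end_N: "\<forall>v\<in>vertices K. c N v = path_end (t v)"
  proof
    fix v assume v: "v \<in> vertices K"
    then have "t v N = t v (P v)" using P N by blast
    also have "\<dots> = path_end (t v)" by (rule path_end_eq[symmetric]) (use P v in blast)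
    finally show "c N v = path_end (t v)" unfolding c_def .
  qed
  show ?thesis by (rule contiguity_equiv_cong[OF ce _ end_N]) (simp add: c_def)
qed

definition full_simplex :: "nat \<Rightarrow> nat set set" where
  "full_simplex d = {\<tau>. \<tau> \<noteq> {} \<and> \<tau> \<subseteq> {..<d}}"

lemma vertices_full_simplex: "vertices (full_simplex d) = {..<d}"
  unfolding vertices_def full_simplex_def by auto

lemma simplicial_complex_full_simplex: "simplicial_complex (full_simplex d)"
  by (rule simplicial_complexI) (auto simp: full_simplex_def intro: finite_subset)

lemma edge_path_connected_full_simplex: "edge_path_connected (full_simplex d)"
  unfolding edge_path_connected_def vertices_full_simplex
  by (auto simp: full_simplex_def intro: r_into_rtrancl)

lemma finite_complex_full_simplex: "finite_complex (full_simplex d)"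
  unfolding finite_complex_def vertices_full_simplex by simp

lemma finite_fibration_lifts_simplex:
  assumes L: "simplicial_complex L" and L': "simplicial_complex L'"
    and fib: "finite_fibration L L' \<phi>"
    and \<sigma>: "\<sigma> \<in> L'" and a: "a \<in> vertices L" "\<phi> a \<in> \<sigma>"
  obtains \<tau> where "\<tau> \<in> L" "\<phi> ` \<tau> = \<sigma>"
proof -
  \<comment> \<open>lift the homotopy on the full simplex from the constant map at \<open>\<phi> a\<close> to an
    enumeration h of \<sigma>; the end of the lift spans a simplex over \<sigma>\<close>
  obtain d and h :: "nat \<Rightarrow> 'b" where h: "h ` {..<d} = \<sigma>"
    using finite_imp_nat_seg_image_inj_on simplicial_complex_simplex[OF L' \<sigma>]
    unfolding lessThan_def by metis
  then have d: "0 < d" using a(2) by auto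
  let ?N = "full_simplex d"
  define g :: "nat \<times> nat \<Rightarrow> 'a" where "g x = a" for x
  define G :: "nat \<times> nat \<Rightarrow> 'b" where "G x = (if snd x = 0 then \<phi> a else h (fst x))" for x
  have "simplicial_map (cprod ?N {{0}}) L g"
    using singleton_in_complex[OF L a(1)] unfolding simplicial_map_def cprod_def g_def
    by (auto simp: image_constant)
  moreover have "simplicial_map (cprod ?N (interval 1)) L' G"
    unfolding simplicial_map_def
  proof
    fix \<rho> assume "\<rho> \<in> cprod ?N (interval 1)"
    then have "\<rho> \<noteq> {}" "fst ` \<rho> \<subseteq> {..<d}" unfolding cprod_def full_simplex_def by auto
    moreover from this(2) have "G ` \<rho> \<subseteq> \<sigma>" using h a(2) unfolding G_def by auto
    ultimately show "G ` \<rho> \<in> L'" using simplicial_complex_face[OF L' \<sigma>] by blast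
  qed
  moreover have "\<forall>x\<in>vertices (cprod ?N {{0}}). \<phi> (g x) = G x"
  proof
    fix x :: "nat \<times> nat" assume "x \<in> vertices (cprod ?N {{0}})"
    then have "snd x \<in> vertices {{0::nat}}" by (rule cprod_vertices(2))
    then show "\<phi> (g x) = G x" unfolding vertices_def g_def G_def by simp
  qed
  ultimately obtain Gt where Gt: "simplicial_map (cprod ?N (interval 1)) L Gt"
    "\<forall>x\<in>vertices (cprod ?N (interval 1)). \<phi> (Gt x) = G x"
    using fib simplicial_complex_full_simplex edge_path_connected_full_simplex
      finite_complex_full_simplex unfolding finite_fibration_def by (metis order_refl)
  define \<rho> where "\<rho> = {..<d} \<times> {1::nat}"
  have \<rho>: "\<rho> \<in> cprod ?N (interval 1)"
    using d unfolding \<rho>_def cprod_def full_simplex_def interval_def by auto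
  show ?thesis
  proof
    show "Gt ` \<rho> \<in> L" using Gt(1) \<rho> unfolding simplicial_map_def by blast
    have "\<phi> ` Gt ` \<rho> = (\<lambda>k. \<phi> (Gt (k, 1))) ` {..<d}" unfolding \<rho>_def by auto
    also have "\<dots> = h ` {..<d}"
      using Gt(2) in_vertices[OF \<rho>] unfolding \<rho>_def G_def by (intro image_cong) auto
    finally show "\<phi> ` Gt ` \<rho> = \<sigma>" using h by simp
  qed
qed

lemma simplicial_map_inv_into_finite_fibration:
  assumes L: "simplicial_complex L" and L': "simplicial_complex L'"
    and fib: "finite_fibration L L' \<phi>" and bij: "bij_betw \<phi> (vertices L) (vertices L')"
  shows "simplicial_map L' L (inv_into (vertices L) \<phi>)"
  unfolding simplicial_map_def
proof
  fix \<sigma> assume \<sigma>: "\<sigma> \<in> L'"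
  then obtain y where y: "y \<in> \<sigma>" using simplicial_complex_simplex[OF L'] by blast
  then have "y \<in> \<phi> ` vertices L" using in_vertices[OF \<sigma>] bij unfolding bij_betw_def by blast
  then obtain a where "a \<in> vertices L" "\<phi> a = y" by blast
  then obtain \<tau> where \<tau>: "\<tau> \<in> L" "\<phi> ` \<tau> = \<sigma>"
    using finite_fibration_lifts_simplex[OF L L' fib \<sigma>] y by metis
  have "\<tau> \<subseteq> vertices L" using \<tau>(1) unfolding vertices_def by blast
  then have "inv_into (vertices L) \<phi> ` \<sigma> = \<tau>"
    using inv_into_image_cancel[OF bij_betw_imp_inj_on[OF bij]] \<tau>(2) by blast
  then show "inv_into (vertices L) \<phi> ` \<sigma> \<in> L" using \<tau>(1) by simp
qed

lemma scat_map_le_scat: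
  assumes "simplicial_map L L' \<phi>"
  shows "scat_map L L' \<phi> v0 \<le> scat L v0"
  using SD_postcomp_le[OF assms, of L "[id, \<lambda>_. v0]"]
  unfolding scat_map_def scat_def by (simp add: comp_def)

lemma TCn_map_le_TCn:
  assumes "simplicial_map L L' \<phi>"
  shows "TCn_map L L' \<phi> n \<le> TCn L n"
  using SD_postcomp_le[OF assms, of "cpower L n" "map (\<lambda>i xs. xs ! i) [0..<n]"]
  unfolding TCn_map_def TCn_def by (simp add: comp_def)

lemma scat_le_TC_map:
  assumes L: "simplicial_complex L" "finite (vertices L)" and L': "simplicial_complex L'"
    and \<phi>: "simplicial_map L L' \<phi>" "inj_on \<phi> (vertices L)" and v0: "v0 \<in> vertices L"
  shows "scat L v0 \<le> TC_map L L' \<phi>"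
proof -
  define \<iota> where "\<iota> x = (x, \<phi> v0)" for x :: 'a
  have \<iota>: "simplicial_map L (cprod L L') \<iota>"
    unfolding simplicial_map_def
  proof
    fix \<sigma> assume \<sigma>: "\<sigma> \<in> L"
    then have "finite \<sigma>" "\<sigma> \<noteq> {}" using simplicial_complex_simplex[OF L(1)] by auto
    moreover have "fst ` \<iota> ` \<sigma> = \<sigma>" "snd ` \<iota> ` \<sigma> = {\<phi> v0}"
      using calculation(2) unfolding \<iota>_def by (auto simp: image_image)
    ultimately show "\<iota> ` \<sigma> \<in> cprod L L'"
      using \<sigma> singleton_in_complex[OF L' simplicial_map_vertex[OF \<phi>(1) v0]]
      unfolding cprod_def by auto
  qed
  have "contiguity_equiv (pullback L \<iota> J) L id (\<lambda>_. v0)"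
    if J: "subcomplex J (cprod L L')" and s: "simplicial_map J (path_complex L) s"
      "\<forall>v\<in>vertices J. pi_map \<phi> (s v) = v" for J s
  proof -
    let ?A = "pullback L \<iota> J"
    have "subcomplex ?A L"
      using J unfolding subcomplex_def[of J] by (intro subcomplex_pullback[OF L(1)]) blast
    then have A: "simplicial_complex ?A" "finite (vertices ?A)"
      using L(2) unfolding subcomplex_def by (meson finite_subset vertices_mono)+
    have "simplicial_map ?A (path_complex L) (s \<circ> \<iota>)"
      using simplicial_map_pullback s(1) by (rule simplicial_map_comp)
    from contiguity_equiv_of_path_map[OF A L(1) this]
    have ce: "contiguity_equiv ?A L (\<lambda>x. s (\<iota> x) 0) (\<lambda>x. path_end (s (\<iota> x)))" by simp
    have "s (\<iota> x) 0 = x \<and> path_end (s (\<iota> x)) = v0" if x: "x \<in> vertices ?A" for x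
    proof -
      have "\<iota> x \<in> vertices J" using simplicial_map_vertex[OF simplicial_map_pullback x] .
      then have "pi_map \<phi> (s (\<iota> x)) = (x, \<phi> v0)" using s(2) unfolding \<iota>_def by simp
      moreover have "simplicial_map ?A L (\<lambda>x. path_end (s (\<iota> x)))"
        using ce unfolding contiguity_equiv_def by blast
      from simplicial_map_vertex[OF this x] have "path_end (s (\<iota> x)) \<in> vertices L" by simp
      ultimately show ?thesis using \<phi>(2) v0 unfolding pi_map_def inj_on_def by auto
    qed
    then show ?thesis using contiguity_equiv_cong[OF ce] by simp
  qed
  then show ?thesis
    unfolding scat_def SD_pair TC_map_def schwarz_genus_eq_cover_genus
    by (intro cover_genus_pullback_le[OF L(1) \<iota>]) blast
qed

lemma TC_map_le_TCn_map:
  assumes L: "simplicial_complex L" and L': "simplicial_complex L'"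
    and \<psi>: "simplicial_map L' L \<psi>"
    and \<psi>\<phi>: "\<forall>x\<in>vertices L. \<psi> (\<phi> x) = x" and \<phi>\<psi>: "\<forall>y\<in>vertices L'. \<phi> (\<psi> y) = y"
    and n: "2 \<le> n"
  shows "TC_map L L' \<phi> \<le> TCn_map L L' \<phi> n"
proof -
  define e where "e v = fst v # replicate (n - 1) (\<psi> (snd v))" for v :: "'a \<times> 'b"
  have e_nth: "e v ! i = (if i = 0 then fst v else \<psi> (snd v))" if "i < n" for v i
    using that unfolding e_def by (simp add: nth_Cons')
  have e: "simplicial_map (cprod L L') (cpower L n) e"
    unfolding simplicial_map_def
  proof
    fix \<sigma> assume "\<sigma> \<in> cprod L L'"
    then have \<sigma>: "finite \<sigma>" "\<sigma> \<noteq> {}" "fst ` \<sigma> \<in> L" "\<psi> ` snd ` \<sigma> \<in> L"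
      using \<psi> unfolding cprod_def simplicial_map_def by auto
    have "(\<lambda>xs. xs ! i) ` e ` \<sigma> \<in> L" if "i < n" for i
      using \<sigma>(3,4) e_nth[OF that] by (cases "i = 0") (simp_all add: image_image)
    then show "e ` \<sigma> \<in> cpower L n" using \<sigma>(1,2) n unfolding cpower_def e_def by auto
  qed
  let ?\<phi>0 = "\<lambda>xs. \<phi> (xs ! 0)" and ?\<phi>1 = "\<lambda>xs. \<phi> (xs ! 1)"
  have "\<exists>s. simplicial_map (pullback (cprod L L') e J) (path_complex L) s \<and>
      (\<forall>v\<in>vertices (pullback (cprod L L') e J). pi_map \<phi> (s v) = v)"
    if J: "subcomplex J (cpower L n)" and c: "contiguity_equiv J L' ?\<phi>0 ?\<phi>1" for J
  proof -
    let ?A = "pullback (cprod L L') e J"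
    have "subcomplex ?A (cprod L L')"
      using J unfolding subcomplex_def[of J]
      by (intro subcomplex_pullback[OF simplicial_complex_cprod[OF L L']]) blast
    then have A: "simplicial_complex ?A" "vertices ?A \<subseteq> vertices (cprod L L')"
      unfolding subcomplex_def by (simp_all add: vertices_mono)
    from c have ce: "contiguity_equiv ?A L (\<psi> \<circ> (?\<phi>0 \<circ> e)) (\<psi> \<circ> (?\<phi>1 \<circ> e))"
      by (rule contiguity_equiv_postcomp[OF contiguity_equiv_precomp[OF _ simplicial_map_pullback] \<psi>])
    have "\<forall>v\<in>vertices ?A. fst v \<in> vertices L \<and> \<psi> (snd v) \<in> vertices L"
      using A(2) cprod_vertices simplicial_map_vertex[OF \<psi>] by blast
    then have "contiguity_equiv ?A L fst (\<lambda>v. \<psi> (snd v))"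
      by (intro contiguity_equiv_cong[OF ce]) (use e_nth n \<psi>\<phi> in auto)
    then obtain s where s: "simplicial_map ?A (path_complex L) s"
      "\<And>v. s v 0 = fst v" "\<And>v. path_end (s v) = \<psi> (snd v)"
      by (rule path_map_of_contiguity_equiv[OF A(1)]) blast
    have "pi_map \<phi> (s v) = v" if "v \<in> vertices ?A" for v
    proof -
      have "snd v \<in> vertices L'" using that A(2) cprod_vertices(2) by blast
      then show ?thesis using s(2,3) \<phi>\<psi> unfolding pi_map_def by simp
    qed
    then show ?thesis using s(1) by blast
  qed
  then have "TC_map L L' \<phi> \<le> cover_genus (cpower L n) (\<lambda>J. contiguity_equiv J L' ?\<phi>0 ?\<phi>1)"
    unfolding TC_map_def schwarz_genus_eq_cover_genus
    by (intro cover_genus_pullback_le[OF simplicial_complex_cprod[OF L L'] e]) blast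
  also have "\<dots> \<le> TCn_map L L' \<phi> n"
    using cover_genus_pair_le_SD[of 0 "map (\<lambda>i xs. \<phi> (xs ! i)) [0..<n]" 1] n
    unfolding TCn_map_def by simp
  finally show ?thesis .
qed

theorem theorem6p4:
  fixes L :: "'a set set" and L' :: "'b set set" and \<phi> :: "'a \<Rightarrow> 'b"
    and n :: nat and v0 :: 'a
  assumes "simplicial_complex L" and "edge_path_connected L" and "finite_complex L"
    and "simplicial_complex L'" and "edge_path_connected L'" and "finite_complex L'"
    and "simplicial_map L L' \<phi>"
    and "bij_betw \<phi> (vertices L) (vertices L')"
    and "finite_fibration L L' \<phi>"
    and "n \<ge> 2"
    and "v0 \<in> vertices L"
  shows "scat_map L L' \<phi> v0 \<le> scat L v0 \<and>
         scat L v0 \<le> TC_map L L' \<phi> \<and>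
         TC_map L L' \<phi> \<le> min (TC L) (TCn_map L L' \<phi> n) \<and>
         min (TC L) (TCn_map L L' \<phi> n) \<le> TCn L n"
proof -
  note L = assms(1) and L' = assms(4) and \<phi> = assms(7) and bij = assms(8)
  have fin: "finite (vertices L)" using assms(3) unfolding finite_complex_def .
  have inj: "inj_on \<phi> (vertices L)" using bij by (rule bij_betw_imp_inj_on)
  let ?\<psi> = "inv_into (vertices L) \<phi>"
  have \<psi>: "simplicial_map L' L ?\<psi>"
    using simplicial_map_inv_into_finite_fibration[OF L L' assms(9) bij] .
  have \<psi>\<phi>: "\<forall>x\<in>vertices L. ?\<psi> (\<phi> x) = x" using inj by simp
  have \<phi>\<psi>: "\<forall>y\<in>vertices L'. \<phi> (?\<psi> y) = y"
    using bij f_inv_into_f unfolding bij_betw_def by metis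
  have TC_map_le: "TC_map L L' \<phi> \<le> TCn_map L L' \<phi> m" if "2 \<le> m" for m
    using TC_map_le_TCn_map[OF L L' \<psi> \<psi>\<phi> \<phi>\<psi> that] .
  have "TC_map L L' \<phi> \<le> TC L"
    using TC_map_le[of 2] TCn_map_le_TCn[OF \<phi>, of 2] unfolding TC_def by simp
  then show ?thesis
    using scat_map_le_scat[OF \<phi>] scat_le_TC_map[OF L fin L' \<phi> inj assms(11)]
      TC_map_le[OF assms(10)] TCn_map_le_TCn[OF \<phi>, of n]
    by (simp add: min.coboundedI2)
qed

end
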